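(* For integers $n\geqslant 1$ and $m\geqslant 0$ let $\delta_{n,m}$ be the number of M-partitions $\lambda$ of type $(n,n,m)$ with $\lambda_{=2}=\{\mathbf e_1+\mathbf e_i: i=1,\dots,n\}\subset\mathbb N^n$ (with $\delta_{n,0}=0$). Then $\Phi_n(t)=\sum_{m\geqslant 0}\delta_{n,m}t^m$ satisfies \[ \Phi_1(t)=\sum_{i\geqslant 1}t^i,\qquad \Phi_n(t)=\sum_{i\geqslant 1}t^{\,i+n-2}\Big(\frac{1-t^i}{1-t}\Big)^{n-1}\quad(n\geqslant 2). \]
   Context: Let $\mathbb N=\mathbb Z_{\geqslant 0}$ with the componentwise order and $\mathbf e_i$ the standard basis vectors. $\mathrm P^n_d$ is the set of subsets $\lambda\subset\mathbb N^n$ of size $d$ closed downward. The degree of a point is the sum of its coordinates; $\lambda_{=i}$, $\lambda_{\geqslant i}$ are the elements of degree $i$, resp. $\geqslant i$; $h_\lambda(i)=|\lambda_{=i}|$; $\mathrm{Soc}(\lambda)$ is the set of maximal elements. For positive integers $k,q,m$, an M-partition of type $(k,q,m)$ is $\lambda\in\mathrm P^k_{1+k+q+m}$ with $\mathrm{Soc}(\lambda)\subset\lambda_{\geqslant3}$, $h_\lambda(1)=k$, $h_\lambda(2)=q$, $\sum_{i\geqslant3}h_\lambda(i)=m$. *)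

theory Defs
  imports Main "HOL-Computational_Algebra.Formal_Power_Series"
begin

text \<open>Points of N^n are modelled as functions nat => nat vanishing outside {0..<n}
  (coordinate i of the paper is index i-1 here). The order on nat => nat is the
  pointwise (componentwise) order.\<close>

definition pts :: "nat \<Rightarrow> (nat \<Rightarrow> nat) set" where
  "pts n = {x. \<forall>j\<ge>n. x j = 0}"

definition deg :: "nat \<Rightarrow> (nat \<Rightarrow> nat) \<Rightarrow> nat" where
  "deg n x = (\<Sum>j<n. x j)"

definition ebasis :: "nat \<Rightarrow> nat \<Rightarrow> nat" where
  "ebasis i = (\<lambda>j. if j = i then 1 else 0)"

definition Pset :: "nat \<Rightarrow> nat \<Rightarrow> (nat \<Rightarrow> nat) set set" where
  "Pset n d = {lam. lam \<subseteq> pts n \<and> finite lam \<and> card lam = d \<and>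
      (\<forall>x\<in>lam. \<forall>y\<in>pts n. y \<le> x \<longrightarrow> y \<in> lam)}"

definition layer :: "nat \<Rightarrow> (nat \<Rightarrow> nat) set \<Rightarrow> nat \<Rightarrow> (nat \<Rightarrow> nat) set" where
  "layer n lam i = {x\<in>lam. deg n x = i}"

definition layer_ge :: "nat \<Rightarrow> (nat \<Rightarrow> nat) set \<Rightarrow> nat \<Rightarrow> (nat \<Rightarrow> nat) set" where
  "layer_ge n lam i = {x\<in>lam. deg n x \<ge> i}"

definition hfun :: "nat \<Rightarrow> (nat \<Rightarrow> nat) set \<Rightarrow> nat \<Rightarrow> nat" where
  "hfun n lam i = card (layer n lam i)"

definition Soc :: "(nat \<Rightarrow> nat) set \<Rightarrow> (nat \<Rightarrow> nat) set" where
  "Soc lam = {x\<in>lam. \<forall>y\<in>lam. x \<le> y \<longrightarrow> y = x}"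

text \<open>M-partition of type (k,q,m); sum of h(i) over i>=3 is the number of elements
  of degree >= 3.\<close>
definition M_partition :: "nat \<Rightarrow> nat \<Rightarrow> nat \<Rightarrow> (nat \<Rightarrow> nat) set \<Rightarrow> bool" where
  "M_partition k q m lam \<longleftrightarrow> 0 < k \<and> 0 < q \<and> 0 < m \<and>
     lam \<in> Pset k (1 + k + q + m) \<and> Soc lam \<subseteq> layer_ge k lam 3 \<and>
     hfun k lam 1 = k \<and> hfun k lam 2 = q \<and> card (layer_ge k lam 3) = m"

definition delta :: "nat \<Rightarrow> nat \<Rightarrow> nat" where
  "delta n m = card {lam. M_partition n n m lam \<and>
      layer n lam 2 = {(\<lambda>j. ebasis 0 j + ebasis i j) | i. i < n}}"

definition Phi :: "nat \<Rightarrow> rat fps" where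
  "Phi n = Abs_fps (\<lambda>m. of_nat (delta n m))"

end

theory Submission
  imports Defs
begin

text \<open>
  If the degree-2 layer of lambda is {e1 + ei}, no point of lambda lies above e_j + e_k with
  j, k >= 2, since that point has degree 2 but is not in the layer. Hence lambda is a broom:
  a column a e1 (a <= p) together with columns a e1 + ei (a <= c_i), i = 2..n.
  Down-closedness gives c_i <= p, the socle condition gives c_i >= 2 and either p >= 3 or
  c_i = p for some i, and m = (p - 2) + sum (c_i - 1); conversely every such (p, c) is an
  M-partition. Writing p = i + 2, the c_i range independently over {2..i+2}, each
  contributing t^(c_i - 1), and these sum to t (1 - t^(i+1)) / (1 - t). For n >= 2 the side
  condition is automatic when p = 2 (then every c_i = p); for n = 1 it excludes p = 2, which
  shifts the sum to the terms t^(i+1).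
\<close>

section \<open>Points on the columns\<close>

text \<open>\<open>col_pt a 0\<close> is \<open>a e\<^sub>1\<close> and, for \<open>i \<ge> 1\<close>, \<open>col_pt a i\<close> is \<open>a e\<^sub>1 + e\<^sub>i\<^sub>+\<^sub>1\<close>
  in the paper's coordinates.\<close>

definition col_pt :: "nat \<Rightarrow> nat \<Rightarrow> nat \<Rightarrow> nat" where
  "col_pt a i = (\<lambda>j. if j = 0 then a else if j = i then 1 else 0)"

lemma col_pt_0 [simp]: "col_pt a i 0 = a"
  by (simp add: col_pt_def)

lemma col_pt_eq_iff [simp]: "col_pt a i = col_pt b k \<longleftrightarrow> a = b \<and> i = k"
  by (auto simp: col_pt_def fun_eq_iff)

lemma col_pt_le_iff: "col_pt a i \<le> col_pt b k \<longleftrightarrow> a \<le> b \<and> (i = 0 \<or> i = k)"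
  by (auto simp: col_pt_def le_fun_def)

lemma le_col_pt_iff: "y \<le> col_pt a i \<longleftrightarrow> (\<exists>b\<le>a. y = col_pt b 0 \<or> y = col_pt b i)"
proof
  assume le: "y \<le> col_pt a i"
  then have y_le: "y j \<le> col_pt a i j" for j
    by (simp add: le_fun_def)
  have off_col: "y j = 0" if "j \<noteq> 0" "j \<noteq> i" for j
    using y_le[of j] that by (simp add: col_pt_def)
  have "y = col_pt (y 0) 0 \<or> y = col_pt (y 0) i"
    using off_col y_le[of i] by (cases "i = 0 \<or> y i = 0") (auto simp: col_pt_def fun_eq_iff)
  then show "\<exists>b\<le>a. y = col_pt b 0 \<or> y = col_pt b i"
    using y_le[of 0] by auto
qed (auto simp: col_pt_le_iff)

lemma col_pt_in_pts: "i < n \<Longrightarrow> col_pt a i \<in> pts n"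
  by (auto simp: pts_def col_pt_def)

lemma deg_col_pt: "i < n \<Longrightarrow> deg n (col_pt a i) = (if i = 0 then a else a + 1)"
  by (auto simp: deg_def col_pt_def sum.If_cases lessThan_def)

lemma pts_down_closed: "x \<in> pts n \<Longrightarrow> y \<le> x \<Longrightarrow> y \<in> pts n"
  by (auto simp: pts_def le_fun_def) (metis le_zero_eq)

lemma ebasis_add_in_pts_iff: "(\<lambda>t. ebasis j t + ebasis k t) \<in> pts n \<longleftrightarrow> j < n \<and> k < n"
proof
  assume "(\<lambda>t. ebasis j t + ebasis k t) \<in> pts n"
  then have vanish: "\<forall>t\<ge>n. ebasis j t + ebasis k t = 0"
    by (simp add: pts_def)
  show "j < n \<and> k < n"
    using vanish[rule_format, of j] vanish[rule_format, of k] by (auto simp: ebasis_def simp flip: not_le)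
qed (auto simp: pts_def ebasis_def)

lemma deg_ebasis_add: "j < n \<Longrightarrow> k < n \<Longrightarrow> deg n (\<lambda>t. ebasis j t + ebasis k t) = 2"
  by (simp add: deg_def ebasis_def sum.distrib)

lemma ebasis_add_le_iff:
  "(\<lambda>t. ebasis j t + ebasis k t) \<le> x \<longleftrightarrow> (if j = k then 2 \<le> x j else 1 \<le> x j \<and> 1 \<le> x k)"
proof
  assume le: "(\<lambda>t. ebasis j t + ebasis k t) \<le> x"
  show "if j = k then 2 \<le> x j else 1 \<le> x j \<and> 1 \<le> x k"
    using le_funD[OF le, of j] le_funD[OF le, of k] by (auto simp: ebasis_def split: if_splits)
next
  assume "if j = k then 2 \<le> x j else 1 \<le> x j \<and> 1 \<le> x k"
  then show "(\<lambda>t. ebasis j t + ebasis k t) \<le> x"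
    by (intro le_funI) (simp add: ebasis_def split: if_splits)
qed

lemma ex_col_pt_eq_if_no_off_axis_pair_below:
  assumes x: "x \<in> pts n" and n: "0 < n"
    and no_pair: "\<And>j k. 0 < j \<Longrightarrow> 0 < k \<Longrightarrow> (\<lambda>t. ebasis j t + ebasis k t) \<le> x \<Longrightarrow> False"
  shows "\<exists>i<n. x = col_pt (x 0) i"
proof -
  have at_most_1: "x j \<le> 1" if "0 < j" for j
  proof (rule ccontr)
    assume "\<not> x j \<le> 1"
    then have "(\<lambda>t. ebasis j t + ebasis j t) \<le> x"
      by (simp add: ebasis_add_le_iff)
    then show False
      by (rule no_pair[OF that that])
  qed
  have unique: "j = k" if "0 < j" "0 < k" "x j \<noteq> 0" "x k \<noteq> 0" for j k
  proof (rule ccontr)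
    assume "j \<noteq> k"
    then have "(\<lambda>t. ebasis j t + ebasis k t) \<le> x"
      using that(3,4) by (simp add: ebasis_add_le_iff)
    then show False
      by (rule no_pair[OF that(1,2)])
  qed
  show ?thesis
  proof (cases "\<exists>i>0. x i \<noteq> 0")
    case True
    then obtain i where i: "0 < i" "x i \<noteq> 0"
      by blast
    have "i < n"
    proof (rule ccontr)
      assume "\<not> i < n"
      then have "x i = 0"
        using x by (simp add: pts_def)
      with i show False
        by simp
    qed
    moreover have "x = col_pt (x 0) i"
    proof
      fix t
      have "x i = 1"
        using i at_most_1[OF i(1)] by simp
      moreover have "x t = 0" if "t \<noteq> 0" "t \<noteq> i"
        using unique[OF i(1) _ i(2), of t] that by auto
      ultimately show "x t = col_pt (x 0) i t"
        by (auto simp: col_pt_def)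
    qed
    ultimately show ?thesis
      by blast
  next
    case False
    then have "x t = 0" if "t \<noteq> 0" for t
      using that by blast
    then have "x = col_pt (x 0) 0"
      by (auto simp: col_pt_def)
    then show ?thesis
      using n by blast
  qed
qed

section \<open>Brooms\<close>

definition broom :: "nat \<Rightarrow> nat \<Rightarrow> (nat \<Rightarrow> nat) \<Rightarrow> (nat \<Rightarrow> nat) set" where
  "broom n p c = (\<lambda>a. col_pt a 0) ` {..p} \<union> (\<lambda>(i, a). col_pt a i) ` (SIGMA i:{1..<n}. {..c i})"

lemma mem_broom:
  "x \<in> broom n p c \<longleftrightarrow> (\<exists>a\<le>p. x = col_pt a 0) \<or> (\<exists>i\<in>{1..<n}. \<exists>a\<le>c i. x = col_pt a i)"
  by (auto simp: broom_def)

lemma col_pt_in_broom_iff [simp]: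
  "col_pt a i \<in> broom n p c \<longleftrightarrow> (if i = 0 then a \<le> p else i < n \<and> a \<le> c i)"
  by (auto simp: mem_broom)

lemma broom_restrict: "broom n p (restrict c {1..<n}) = broom n p c"
  by (rule set_eqI) (auto simp: mem_broom)

lemma finite_broom: "finite (broom n p c)"
  by (simp add: broom_def)

lemma broom_subset_pts: "0 < n \<Longrightarrow> broom n p c \<subseteq> pts n"
  by (auto simp: mem_broom col_pt_in_pts)

lemma broom_down_closed:
  assumes "\<forall>i\<in>{1..<n}. c i \<le> p" and "x \<in> broom n p c" and "y \<le> x"
  shows "y \<in> broom n p c"
proof -
  obtain i a where x: "x = col_pt a i" and i: "i = 0 \<or> i \<in> {1..<n}"
    and a: "a \<le> (if i = 0 then p else c i)"
    using assms(2) by (auto simp: mem_broom)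
  have "(if i = 0 then p else c i) \<le> p"
    using assms(1) i by auto
  moreover obtain b where "b \<le> a" "y = col_pt b 0 \<or> y = col_pt b i"
    using assms(3) x by (auto simp: le_col_pt_iff)
  ultimately show ?thesis
    using a i by (auto split: if_splits)
qed

lemma card_col_pt_union:
  assumes "finite A" "finite I" "0 \<notin> I" "\<And>i. i \<in> I \<Longrightarrow> finite (B i)"
  shows "card ((\<lambda>a. col_pt a 0) ` A \<union> (\<lambda>(i, a). col_pt a i) ` (SIGMA i:I. B i))
    = card A + (\<Sum>i\<in>I. card (B i))"
proof -
  have "inj_on (\<lambda>(i, a). col_pt a i) (SIGMA i:I. B i)"
    by (auto simp: inj_on_def)
  moreover have "(\<lambda>a. col_pt a 0) ` A \<inter> (\<lambda>(i, a). col_pt a i) ` (SIGMA i:I. B i) = {}"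
    using assms(3) by auto
  ultimately show ?thesis
    using assms by (simp add: card_Un_disjoint card_image inj_on_def)
qed

lemma layer_ge_broom:
  assumes "0 < n"
  shows "layer_ge n (broom n p c) d
    = (\<lambda>a. col_pt a 0) ` {d..p} \<union> (\<lambda>(i, a). col_pt a i) ` (SIGMA i:{1..<n}. {d - 1..c i})"
  using assms by (auto simp: layer_ge_def mem_broom deg_col_pt)

text \<open>Truncated subtraction makes this correct also for \<open>d = 0\<close>.\<close>

lemma card_layer_ge_broom:
  "0 < n \<Longrightarrow> card (layer_ge n (broom n p c) d) = (Suc p - d) + (\<Sum>i\<in>{1..<n}. Suc (c i) - (d - 1))"
  by (simp add: layer_ge_broom card_col_pt_union)

lemma card_broom: "0 < n \<Longrightarrow> card (broom n p c) = Suc p + (\<Sum>i\<in>{1..<n}. Suc (c i))"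
  using card_layer_ge_broom[of n p c 0] by (simp add: layer_ge_def)

lemma card_broom_eq_card_layer_ge_3:
  assumes n: "0 < n" and "2 \<le> p" and c: "\<forall>i\<in>{1..<n}. 1 \<le> c i"
  shows "card (broom n p c) = 1 + n + n + card (layer_ge n (broom n p c) 3)"
proof -
  have "(\<Sum>i\<in>{1..<n}. Suc (c i)) = (\<Sum>i\<in>{1..<n}. (Suc (c i) - 2) + 2)"
    using c by (intro sum.cong refl) fastforce
  also have "\<dots> = (\<Sum>i\<in>{1..<n}. Suc (c i) - 2) + 2 * (n - 1)"
    by (simp only: sum.distrib sum_constant card_atLeastLessThan of_nat_id mult.commute)
  finally show ?thesis
    using assms by (simp add: card_broom card_layer_ge_broom)
qed

lemma layer_broom:
  assumes "0 < n" "Suc d \<le> p" "\<forall>i\<in>{1..<n}. d \<le> c i"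
  shows "layer n (broom n p c) (Suc d) = insert (col_pt (Suc d) 0) ((\<lambda>i. col_pt d i) ` {1..<n})"
  using assms by (auto simp: layer_def mem_broom deg_col_pt)

lemma card_insert_col_pts: "0 < n \<Longrightarrow> card (insert (col_pt a 0) ((\<lambda>i. col_pt b i) ` {1..<n})) = n"
  by (subst card_insert_disjoint) (auto simp: card_image inj_on_def)

lemma col_pt_in_Soc_broom_iff:
  assumes "i \<noteq> 0"
  shows "col_pt a i \<in> Soc (broom n p c) \<longleftrightarrow> i < n \<and> a = c i"
proof
  assume "col_pt a i \<in> Soc (broom n p c)"
  then have mem: "col_pt a i \<in> broom n p c"
    and max: "\<And>y. y \<in> broom n p c \<Longrightarrow> col_pt a i \<le> y \<Longrightarrow> y = col_pt a i"
    by (auto simp: Soc_def)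
  from mem have "i < n" "a \<le> c i"
    using assms by simp_all
  then have "col_pt (c i) i = col_pt a i"
    using assms by (intro max) (simp_all add: col_pt_le_iff)
  with \<open>i < n\<close> show "i < n \<and> a = c i"
    by simp
next
  assume "i < n \<and> a = c i"
  then show "col_pt a i \<in> Soc (broom n p c)"
    using assms by (auto simp: Soc_def mem_broom col_pt_le_iff)
qed

lemma col_pt_0_in_Soc_broom_iff:
  assumes "\<forall>i\<in>{1..<n}. c i \<le> p"
  shows "col_pt a 0 \<in> Soc (broom n p c) \<longleftrightarrow> a = p \<and> (\<forall>i\<in>{1..<n}. c i \<noteq> p)"
proof
  assume "col_pt a 0 \<in> Soc (broom n p c)"
  then have "a \<le> p"
    and max: "\<And>y. y \<in> broom n p c \<Longrightarrow> col_pt a 0 \<le> y \<Longrightarrow> y = col_pt a 0"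
    by (auto simp: Soc_def)
  then have "col_pt p 0 = col_pt a 0"
    by (intro max) (simp_all add: col_pt_le_iff)
  then have "a = p"
    by simp
  moreover have "c i \<noteq> p" if i: "i \<in> {1..<n}" for i
  proof
    assume "c i = p"
    then have "col_pt p i = col_pt a 0"
      using i \<open>a = p\<close> by (intro max) (auto simp: col_pt_le_iff)
    with i show False
      by simp
  qed
  ultimately show "a = p \<and> (\<forall>i\<in>{1..<n}. c i \<noteq> p)"
    by blast
next
  assume "a = p \<and> (\<forall>i\<in>{1..<n}. c i \<noteq> p)"
  then show "col_pt a 0 \<in> Soc (broom n p c)"
    using assms by (fastforce simp: Soc_def mem_broom col_pt_le_iff)
qed

lemma Soc_broom_subset_layer_ge_iff:
  assumes "0 < n" "\<forall>i\<in>{1..<n}. c i \<le> p"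
  shows "Soc (broom n p c) \<subseteq> layer_ge n (broom n p c) 3
    \<longleftrightarrow> (\<forall>i\<in>{1..<n}. 2 \<le> c i) \<and> (3 \<le> p \<or> (\<exists>i\<in>{1..<n}. c i = p))"
proof -
  let ?S = "Soc (broom n p c)"
  have "?S \<subseteq> broom n p c"
    by (auto simp: Soc_def)
  then have "?S \<subseteq> layer_ge n (broom n p c) 3 \<longleftrightarrow> (\<forall>x\<in>?S. 3 \<le> deg n x)"
    by (auto simp: layer_ge_def)
  also have "\<dots> \<longleftrightarrow> (\<forall>i<n. \<forall>a. col_pt a i \<in> ?S \<longrightarrow> 3 \<le> deg n (col_pt a i))"
  proof -
    have "?S \<subseteq> {col_pt a i | a i. i < n}"
      using assms(1) by (auto simp: Soc_def mem_broom)
    then show ?thesis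
      by blast
  qed
  also have "\<dots> \<longleftrightarrow> (\<forall>a. col_pt a 0 \<in> ?S \<longrightarrow> 3 \<le> a)
      \<and> (\<forall>i\<in>{1..<n}. \<forall>a. col_pt a i \<in> ?S \<longrightarrow> 3 \<le> a + 1)"
    using assms(1) by (auto simp: deg_col_pt)
  also have "\<dots> \<longleftrightarrow> (\<forall>i\<in>{1..<n}. 2 \<le> c i) \<and> (3 \<le> p \<or> (\<exists>i\<in>{1..<n}. c i = p))"
    using assms(2) by (auto simp: col_pt_in_Soc_broom_iff col_pt_0_in_Soc_broom_iff)
  finally show ?thesis .
qed

definition down_closed :: "nat \<Rightarrow> (nat \<Rightarrow> nat) set \<Rightarrow> bool" where
  "down_closed n lam \<longleftrightarrow> (\<forall>x\<in>lam. \<forall>y\<in>pts n. y \<le> x \<longrightarrow> y \<in> lam)"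

lemma down_closedD: "down_closed n lam \<Longrightarrow> x \<in> lam \<Longrightarrow> y \<in> pts n \<Longrightarrow> y \<le> x \<Longrightarrow> y \<in> lam"
  by (auto simp: down_closed_def)

lemma ex_col_pt_eq_if_layer_2_off_axis_free:
  assumes n: "0 < n" and dc: "down_closed n lam" and x: "x \<in> lam" "x \<in> pts n"
    and layer_2: "\<And>z. z \<in> layer n lam 2 \<Longrightarrow> z 0 \<noteq> 0"
  shows "\<exists>i<n. x = col_pt (x 0) i"
proof (rule ex_col_pt_eq_if_no_off_axis_pair_below[OF x(2) n])
  fix j k
  assume jk: "0 < j" "0 < k" and le: "(\<lambda>t. ebasis j t + ebasis k t) \<le> x"
  let ?y = "\<lambda>t. ebasis j t + ebasis k t"
  have y_pts: "?y \<in> pts n"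
    using pts_down_closed[OF x(2) le] .
  then have "j < n" "k < n"
    by (simp_all add: ebasis_add_in_pts_iff)
  then have "?y \<in> layer n lam 2"
    using down_closedD[OF dc x(1) y_pts le] by (simp add: layer_def deg_ebasis_add)
  then show False
    using layer_2 jk by (fastforce simp: ebasis_def)
qed

definition col_height :: "(nat \<Rightarrow> nat) set \<Rightarrow> nat \<Rightarrow> nat" where
  "col_height lam i = Max {a. col_pt a i \<in> lam}"

lemma col_pt_mem_iff_le_col_height:
  assumes "finite lam" "down_closed n lam" "i < n" "col_pt 0 i \<in> lam"
  shows "col_pt a i \<in> lam \<longleftrightarrow> a \<le> col_height lam i"
proof -
  have "finite {a. col_pt a i \<in> lam}"
    using finite_vimageI[OF assms(1), of "\<lambda>a. col_pt a i"] by (simp add: vimage_def inj_def)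
  then have top: "col_pt (col_height lam i) i \<in> lam"
    and le_top: "\<And>a. col_pt a i \<in> lam \<Longrightarrow> a \<le> col_height lam i"
    using assms(4) Max_in[of "{a. col_pt a i \<in> lam}"] by (auto simp: col_height_def)
  have "col_pt a i \<in> lam" if "a \<le> col_height lam i"
    using down_closedD[OF assms(2) top col_pt_in_pts[OF assms(3)]] that by (simp add: col_pt_le_iff)
  with le_top show ?thesis
    by blast
qed

lemma col_height_le_col_height_0:
  assumes "finite lam" "down_closed n lam" "i < n" "col_pt 0 i \<in> lam" "col_pt 0 0 \<in> lam"
  shows "col_height lam i \<le> col_height lam 0"
proof -
  have top: "col_pt (col_height lam i) i \<in> lam"
    using col_pt_mem_iff_le_col_height[OF assms(1-4)] by simp
  have "col_pt (col_height lam i) 0 \<in> pts n"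
    using assms(3) by (simp add: col_pt_in_pts)
  then have "col_pt (col_height lam i) 0 \<in> lam"
    by (rule down_closedD[OF assms(2) top]) (simp add: col_pt_le_iff)
  then show ?thesis
    using col_pt_mem_iff_le_col_height[OF assms(1,2) _ assms(5)] assms(3) by simp
qed

lemma eq_broom_col_height:
  assumes "finite lam" "down_closed n lam" "0 < n"
    and cols: "\<And>i. i < n \<Longrightarrow> col_pt 0 i \<in> lam"
    and shape: "\<And>x. x \<in> lam \<Longrightarrow> \<exists>i<n. x = col_pt (x 0) i"
  shows "lam = broom n (col_height lam 0) (col_height lam)"
proof (rule set_eqI)
  fix x
  have mem: "col_pt a i \<in> lam \<longleftrightarrow> a \<le> col_height lam i" if "i < n" for a i
    using col_pt_mem_iff_le_col_height[OF assms(1,2) that cols[OF that]] .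
  show "x \<in> lam \<longleftrightarrow> x \<in> broom n (col_height lam 0) (col_height lam)"
  proof
    assume "x \<in> lam"
    with shape obtain i a where "i < n" "x = col_pt a i"
      by blast
    with \<open>x \<in> lam\<close> mem show "x \<in> broom n (col_height lam 0) (col_height lam)"
      by auto
  next
    assume "x \<in> broom n (col_height lam 0) (col_height lam)"
    then show "x \<in> lam"
      using mem assms(3) by (auto simp: mem_broom)
  qed
qed

section \<open>M-partitions with the prescribed degree-2 layer are brooms\<close>

lemma ebasis_0_add_eq_col_pt:
  "(\<lambda>j. ebasis 0 j + ebasis i j) = (if i = 0 then col_pt 2 0 else col_pt 1 i)"
  by (auto simp: ebasis_def col_pt_def)

lemma ebasis_pairs_eq_col_pts:
  assumes "0 < n"
  shows "{(\<lambda>j. ebasis 0 j + ebasis i j) | i. i < n}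
    = insert (col_pt 2 0) ((\<lambda>i. col_pt 1 i) ` {1..<n})"
proof -
  have "{(\<lambda>j. ebasis 0 j + ebasis i j) | i. i < n}
      = (\<lambda>i. if i = 0 then col_pt 2 0 else col_pt 1 i) ` {..<n}"
    unfolding ebasis_0_add_eq_col_pt by blast
  also have "{..<n} = insert 0 {1..<n}"
    using assms by auto
  finally show ?thesis
    by (simp add: Int_absorb2 subset_iff)
qed

definition broom_params :: "nat \<Rightarrow> nat \<Rightarrow> (nat \<times> (nat \<Rightarrow> nat)) set" where
  "broom_params n m = {(p, c). 2 \<le> p \<and> c \<in> {1..<n} \<rightarrow>\<^sub>E {2..p} \<and>
     (3 \<le> p \<or> (\<exists>i\<in>{1..<n}. c i = p)) \<and> m = p - 2 + (\<Sum>i\<in>{1..<n}. c i - 1)}"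

lemma M_partition_broom:
  assumes n: "0 < n" and params: "(p, c) \<in> broom_params n m"
  shows "M_partition n n m (broom n p c)"
    and "layer n (broom n p c) 2 = insert (col_pt 2 0) ((\<lambda>i. col_pt 1 i) ` {1..<n})"
proof -
  have p: "2 \<le> p" and c: "\<forall>i\<in>{1..<n}. 2 \<le> c i \<and> c i \<le> p"
    and top: "3 \<le> p \<or> (\<exists>i\<in>{1..<n}. c i = p)" and m: "m = p - 2 + (\<Sum>i\<in>{1..<n}. c i - 1)"
    using params by (auto simp: broom_params_def PiE_iff)
  have c1: "\<forall>i\<in>{1..<n}. 1 \<le> c i"
    using c by fastforce
  have "0 < m"
  proof (cases "3 \<le> p")
    case False
    then obtain i where "i \<in> {1..<n}" "c i = p"
      using top by blast
    then have "c i - 1 \<le> (\<Sum>i\<in>{1..<n}. c i - 1)"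
      by (intro member_le_sum) auto
    then show ?thesis
      using m p \<open>c i = p\<close> by linarith
  qed (use m in simp)
  have "card (layer_ge n (broom n p c) 3) = m"
    using n c by (simp add: card_layer_ge_broom m)
  then have "card (broom n p c) = 1 + n + n + m"
    using card_broom_eq_card_layer_ge_3[OF n p c1] by simp
  then have "broom n p c \<in> Pset n (1 + n + n + m)"
    using n c broom_down_closed[of n c p] by (auto simp: Pset_def finite_broom broom_subset_pts)
  moreover have "Soc (broom n p c) \<subseteq> layer_ge n (broom n p c) 3"
    using n c top by (simp add: Soc_broom_subset_layer_ge_iff)
  moreover have "hfun n (broom n p c) 1 = n"
    using n p layer_broom[of n 0 p c] card_insert_col_pts[OF n, of 1 0] by (simp add: hfun_def)
  moreover show "layer n (broom n p c) 2 = insert (col_pt 2 0) ((\<lambda>i. col_pt 1 i) ` {1..<n})"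
    using layer_broom[OF n _ c1] p by (simp add: numeral_2_eq_2)
  moreover note \<open>card (layer_ge n (broom n p c) 3) = m\<close>
  ultimately show "M_partition n n m (broom n p c)"
    using n \<open>0 < m\<close> card_insert_col_pts[OF n, of 2 1] by (simp add: M_partition_def hfun_def)
qed

lemma broom_of_M_partition:
  assumes n: "0 < n" and M: "M_partition n n m lam"
    and L: "layer n lam 2 = insert (col_pt 2 0) ((\<lambda>i. col_pt 1 i) ` {1..<n})"
  shows "\<exists>(p, c)\<in>broom_params n m. lam = broom n p c"
proof -
  have fin: "finite lam" and sub: "lam \<subseteq> pts n" and dc: "down_closed n lam"
    and soc: "Soc lam \<subseteq> layer_ge n lam 3" and m: "card (layer_ge n lam 3) = m"
    using M by (auto simp: M_partition_def Pset_def down_closed_def)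
  have "layer n lam 2 \<subseteq> lam"
    by (auto simp: layer_def)
  then have top0: "col_pt 2 0 \<in> lam" and top: "\<And>i. i \<in> {1..<n} \<Longrightarrow> col_pt 1 i \<in> lam"
    using L by auto
  have cols: "col_pt 0 i \<in> lam" if "i < n" for i
  proof -
    have "col_pt 0 i \<le> col_pt (if i = 0 then 2 else 1) i" "col_pt (if i = 0 then 2 else 1) i \<in> lam"
      using top0 top that by (auto simp: col_pt_le_iff)
    then show ?thesis
      using down_closedD[OF dc _ col_pt_in_pts[OF that]] by blast
  qed
  have "\<forall>z\<in>layer n lam 2. z 0 \<noteq> 0"
    using L by auto
  then have shape: "\<exists>i<n. x = col_pt (x 0) i" if "x \<in> lam" for x
    using ex_col_pt_eq_if_layer_2_off_axis_free[OF n dc that] that sub by blast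
  define p where "p = col_height lam 0"
  define c where "c = restrict (col_height lam) {1..<n}"
  have lam: "lam = broom n p c"
    unfolding p_def c_def broom_restrict by (rule eq_broom_col_height[OF fin dc n cols shape])
  have c_le: "\<forall>i\<in>{1..<n}. c i \<le> p"
    using col_height_le_col_height_0[OF fin dc _ cols cols[OF n]] by (simp add: p_def c_def)
  have "2 \<le> p"
    using col_pt_mem_iff_le_col_height[OF fin dc n cols[OF n]] top0 by (simp add: p_def)
  moreover have "(\<forall>i\<in>{1..<n}. 2 \<le> c i) \<and> (3 \<le> p \<or> (\<exists>i\<in>{1..<n}. c i = p))"
    using soc Soc_broom_subset_layer_ge_iff[OF n c_le] lam by simp
  moreover have "m = p - 2 + (\<Sum>i\<in>{1..<n}. c i - 1)"
    using m card_layer_ge_broom[OF n, of p c 3] lam by simp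
  moreover have "c \<in> extensional {1..<n}"
    by (simp add: c_def)
  ultimately have "(p, c) \<in> broom_params n m"
    using c_le by (auto simp: broom_params_def PiE_iff)
  with lam show ?thesis
    by blast
qed

lemma inj_on_broom: "inj_on (\<lambda>(p, c). broom n p c) (broom_params n m)"
proof (rule inj_onI, clarify)
  fix p c p' c'
  assume params: "(p, c) \<in> broom_params n m" "(p', c') \<in> broom_params n m"
    and eq: "broom n p c = broom n p' c'"
  have "col_pt p 0 \<in> broom n p' c'" "col_pt p' 0 \<in> broom n p c"
    using eq by (metis col_pt_in_broom_iff order_refl)+
  then have "p = p'"
    by simp
  moreover have "c i = c' i" if i: "i \<in> {1..<n}" for i
  proof -
    have "col_pt (c i) i \<in> broom n p' c'" "col_pt (c' i) i \<in> broom n p c"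
      using eq i by (metis col_pt_in_broom_iff atLeastLessThan_iff not_one_le_zero order_refl)+
    then show ?thesis
      using i by simp
  qed
  then have "c = c'"
    using params by (intro extensionalityI[of _ "{1..<n}"]) (auto simp: broom_params_def PiE_def)
  ultimately show "p = p' \<and> c = c'"
    by blast
qed

lemma delta_eq_card_broom_params:
  assumes "0 < n"
  shows "delta n m = card (broom_params n m)"
proof -
  have "{lam. M_partition n n m lam \<and> layer n lam 2 = {(\<lambda>j. ebasis 0 j + ebasis i j) | i. i < n}}
      = (\<lambda>(p, c). broom n p c) ` broom_params n m"
    unfolding ebasis_pairs_eq_col_pts[OF assms]
  proof (intro equalityI subsetI)
    fix lam
    assume "lam \<in> {lam. M_partition n n m lam \<and>
      layer n lam 2 = insert (col_pt 2 0) ((\<lambda>i. col_pt 1 i) ` {1..<n})}"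
    then show "lam \<in> (\<lambda>(p, c). broom n p c) ` broom_params n m"
      using broom_of_M_partition[OF assms] by fastforce
  next
    fix lam
    assume "lam \<in> (\<lambda>(p, c). broom n p c) ` broom_params n m"
    then show "lam \<in> {lam. M_partition n n m lam \<and>
      layer n lam 2 = insert (col_pt 2 0) ((\<lambda>i. col_pt 1 i) ` {1..<n})}"
      using M_partition_broom[OF assms] by auto
  qed
  then show ?thesis
    by (simp add: delta_def card_image[OF inj_on_broom])
qed

section \<open>The generating function\<close>

lemma card_broom_params_1: "card (broom_params 1 m) = (if 0 < m then 1 else 0)"
proof -
  have "broom_params 1 m = (if 0 < m then {(m + 2, \<lambda>_. undefined)} else {})"
    by (auto simp: broom_params_def)
  then show ?thesis
    by simp
qed

lemma card_broom_params:
  assumes "2 \<le> n"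
  shows "card (broom_params n m)
    = (\<Sum>i\<le>m. card {c \<in> {1..<n} \<rightarrow>\<^sub>E {2..i + 2}. i + (\<Sum>j\<in>{1..<n}. c j - 1) = m})"
proof -
  let ?C = "\<lambda>i. {c \<in> {1..<n} \<rightarrow>\<^sub>E {2..i + 2}. i + (\<Sum>j\<in>{1..<n}. c j - 1) = m}"
  have "broom_params n m = (\<lambda>(i, c). (i + 2, c)) ` (SIGMA i:{..m}. ?C i)"
  proof (intro equalityI subsetI)
    fix pc
    assume "pc \<in> broom_params n m"
    then obtain p c where "pc = (p, c)" "2 \<le> p" "c \<in> {1..<n} \<rightarrow>\<^sub>E {2..p}"
      "m = p - 2 + (\<Sum>j\<in>{1..<n}. c j - 1)"
      by (auto simp: broom_params_def)
    moreover have "p = p - 2 + 2"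
      using \<open>2 \<le> p\<close> by simp
    ultimately have "pc = (p - 2 + 2, c)" "(p - 2, c) \<in> (SIGMA i:{..m}. ?C i)"
      by (metis, auto)
    then show "pc \<in> (\<lambda>(i, c). (i + 2, c)) ` (SIGMA i:{..m}. ?C i)"
      by force
  next
    fix pc
    assume "pc \<in> (\<lambda>(i, c). (i + 2, c)) ` (SIGMA i:{..m}. ?C i)"
    then obtain i c where pc: "pc = (i + 2, c)" and c: "c \<in> ?C i"
      by auto
    have "1 \<in> {1..<n}"
      using assms by simp
    then have "c 1 \<in> {2..i + 2}"
      using c by (auto simp: PiE_iff)
    then have "2 < i + 2 \<or> (\<exists>j\<in>{1..<n}. c j = i + 2)"
      using \<open>1 \<in> {1..<n}\<close> by (cases "i = 0") (auto intro!: bexI[of _ 1])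
    then show "pc \<in> broom_params n m"
      using pc c by (auto simp: broom_params_def)
  qed
  moreover have "inj_on (\<lambda>(i, c). (i + 2, c)) (SIGMA i:{..m}. ?C i)"
    by (auto simp: inj_on_def)
  moreover have "finite (?C i)" for i
    by (rule finite_subset[of _ "{1..<n} \<rightarrow>\<^sub>E {2..i + 2}"]) (auto intro: finite_PiE)
  ultimately show ?thesis
    by (simp add: card_image)
qed

lemma fps_nth_Phi: "0 < n \<Longrightarrow> fps_nth (Phi n) m = of_nat (card (broom_params n m))"
  by (simp add: Phi_def delta_eq_card_broom_params)

lemma sums_fpsI:
  fixes f :: "nat \<Rightarrow> 'a::comm_ring_1 fps"
  assumes vanish: "\<And>i k. k < i \<Longrightarrow> fps_nth (f i) k = 0"
    and coeff: "\<And>k. fps_nth S k = (\<Sum>i\<le>k. fps_nth (f i) k)"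
  shows "f sums S"
  unfolding sums_def
proof (rule tendsto_fpsI)
  fix k
  show "\<forall>\<^sub>F N in sequentially. fps_nth (\<Sum>i<N. f i) k = fps_nth S k"
  proof (rule eventually_sequentiallyI[of "Suc k"])
    fix N
    assume "Suc k \<le> N"
    then have "(\<Sum>i<N. fps_nth (f i) k) = (\<Sum>i\<le>k. fps_nth (f i) k)"
      by (intro sum.mono_neutral_right) (auto simp: vanish)
    then show "fps_nth (\<Sum>i<N. f i) k = fps_nth S k"
      by (simp add: fps_sum_nth coeff)
  qed
qed

lemma fps_nth_sum_X_power:
  assumes "finite A"
  shows "fps_nth (\<Sum>x\<in>A. fps_X ^ f x :: 'a::comm_ring_1 fps) k = of_nat (card {x\<in>A. f x = k})"
proof -
  have "fps_nth (\<Sum>x\<in>A. fps_X ^ f x :: 'a fps) k = (\<Sum>x\<in>A. of_bool (f x = k))"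
    by (auto simp: fps_sum_nth fps_X_power_nth intro: sum.cong)
  also have "\<dots> = of_nat (card {x\<in>A. f x = k})"
    using assms by (simp add: Collect_conj_eq Int_commute)
  finally show ?thesis .
qed

lemma fps_geometric_quotient:
  "(1 - fps_X ^ Suc i) / (1 - fps_X) = (\<Sum>j\<le>i. fps_X ^ j :: 'a::field fps)"
proof -
  have "(1 - fps_X :: 'a fps) \<noteq> 0"
    by (metis fps_X_neq_one right_minus_eq)
  moreover have "(1 - fps_X ^ Suc i :: 'a fps) = (1 - fps_X) * (\<Sum>j\<le>i. fps_X ^ j)"
    using one_diff_power_eq[of "fps_X :: 'a fps" "Suc i"] by (simp add: lessThan_Suc_atMost)
  ultimately show ?thesis
    by simp
qed

lemma broom_summand_eq:
  assumes "2 \<le> n"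
  shows "(fps_X ^ ((i + 1) + n - 2) * ((1 - fps_X ^ (i + 1)) / (1 - fps_X)) ^ (n - 1) :: 'a::field fps)
    = (\<Sum>c\<in>{1..<n} \<rightarrow>\<^sub>E {2..i + 2}. fps_X ^ (i + (\<Sum>j\<in>{1..<n}. c j - 1)))"
proof -
  have column: "(\<Sum>b\<in>{2..i + 2}. fps_X ^ (b - 1) :: 'a fps) = fps_X * (\<Sum>j\<le>i. fps_X ^ j)" for i
  proof (induction i)
    case (Suc i)
    have "{2..Suc i + 2} = insert (Suc i + 2) {2..i + 2}"
      by auto
    then show ?case
      using Suc by (simp add: algebra_simps)
  qed simp
  have exp: "Suc i + n - 2 = i + (n - 1)"
    using assms by simp
  have "fps_X ^ ((i + 1) + n - 2) * ((1 - fps_X ^ (i + 1)) / (1 - fps_X)) ^ (n - 1)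
      = fps_X ^ i * (fps_X * (\<Sum>j\<le>i. fps_X ^ j :: 'a fps)) ^ (n - 1)"
    unfolding Suc_eq_plus1[symmetric] exp fps_geometric_quotient
    by (simp only: power_add power_mult_distrib mult.assoc)
  also have "\<dots> = fps_X ^ i * (\<Prod>j\<in>{1..<n}. \<Sum>b\<in>{2..i + 2}. fps_X ^ (b - 1))"
    by (simp only: column prod_constant card_atLeastLessThan)
  also have "\<dots> = fps_X ^ i * (\<Sum>c\<in>{1..<n} \<rightarrow>\<^sub>E {2..i + 2}. \<Prod>j\<in>{1..<n}. fps_X ^ (c j - 1))"
    by (subst prod_sum_PiE) auto
  also have "\<dots> = (\<Sum>c\<in>{1..<n} \<rightarrow>\<^sub>E {2..i + 2}. fps_X ^ (i + (\<Sum>j\<in>{1..<n}. c j - 1)))"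
    by (simp add: sum_distrib_left power_sum power_add)
  finally show ?thesis .
qed

lemma fps_nth_broom_summand:
  assumes "2 \<le> n"
  shows "fps_nth (fps_X ^ ((i + 1) + n - 2) * ((1 - fps_X ^ (i + 1)) / (1 - fps_X)) ^ (n - 1) :: 'a::field fps) k
    = of_nat (card {c \<in> {1..<n} \<rightarrow>\<^sub>E {2..i + 2}. i + (\<Sum>j\<in>{1..<n}. c j - 1) = k})"
  unfolding broom_summand_eq[OF assms] by (rule fps_nth_sum_X_power) (simp add: finite_PiE)

lemma fps_nth_broom_summand_eq_0:
  assumes "2 \<le> n" "k < i"
  shows "fps_nth (fps_X ^ ((i + 1) + n - 2) *
    ((1 - fps_X ^ (i + 1)) / (1 - fps_X)) ^ (n - 1) :: 'a::field fps) k = 0"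
proof -
  have no_c: "{c \<in> {1..<n} \<rightarrow>\<^sub>E {2..i + 2}. i + (\<Sum>j\<in>{1..<n}. c j - 1) = k} = {}"
    using assms(2) by auto
  show ?thesis
    unfolding fps_nth_broom_summand[OF assms(1)] no_c by simp
qed

lemma fps_nth_Phi_1: "fps_nth (Phi 1) k = (\<Sum>i\<le>k. fps_nth (fps_X ^ (i + 1) :: rat fps) k)"
proof -
  have "{i\<in>{..k}. i + 1 = k} = (if 0 < k then {k - 1} else {})"
    by auto
  then have "(\<Sum>i\<le>k. fps_nth (fps_X ^ (i + 1) :: rat fps) k) = (if 0 < k then 1 else 0)"
    using fps_nth_sum_X_power[of "{..k}" "\<lambda>i. i + 1" k, where 'a = rat] by (simp add: fps_sum_nth)
  moreover have "fps_nth (Phi 1) k = (if 0 < k then 1 else 0)"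
    using fps_nth_Phi[of 1 k] card_broom_params_1[of k] by simp
  ultimately show ?thesis
    by simp
qed

lemma fps_nth_Phi_eq_sum_broom_summands:
  assumes "2 \<le> n"
  shows "fps_nth (Phi n) k = (\<Sum>i\<le>k. fps_nth (fps_X ^ ((i + 1) + n - 2) *
    ((1 - fps_X ^ (i + 1)) / (1 - fps_X)) ^ (n - 1) :: rat fps) k)"
proof -
  have "fps_nth (Phi n) k = of_nat (card (broom_params n k))"
    using assms by (simp add: fps_nth_Phi)
  then show ?thesis
    unfolding fps_nth_broom_summand[OF assms] card_broom_params[OF assms] by simp
qed

theorem lemma5p8:
  shows "(\<lambda>i. fps_X ^ (i + 1)) sums Phi 1 \<and>
    (\<forall>n\<ge>2. (\<lambda>i. fps_X ^ ((i + 1) + n - 2) *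
        ((1 - fps_X ^ (i + 1)) / (1 - fps_X)) ^ (n - 1)) sums Phi n)"
proof (intro conjI allI impI)
  show "(\<lambda>i. fps_X ^ (i + 1)) sums Phi 1"
    by (rule sums_fpsI) (simp, rule fps_nth_Phi_1)
next
  fix n :: nat
  assume n: "2 \<le> n"
  show "(\<lambda>i. fps_X ^ ((i + 1) + n - 2) * ((1 - fps_X ^ (i + 1)) / (1 - fps_X)) ^ (n - 1)) sums Phi n"
    by (rule sums_fpsI)
      (rule fps_nth_broom_summand_eq_0[OF n], assumption, rule fps_nth_Phi_eq_sum_broom_summands[OF n])
qed

end
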